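(* Let $\mathcal{N}$ be a closed chemical reaction network, $\{\omega^1,\dots,\omega^d\}$ a reduced basis of $\Gamma^\perp$, and $\widetilde f_\kappa$ the associated extended rate function. For a rate vector $\kappa\in\mathbb{R}_+^{\mathcal{R}}$, let $\kappa^o$, $g_{\kappa^o}$, $\delta_i$ and $E^n_{d+1}$ be as defined in the context. Then, for every $c\in\mathbb{R}^n$, $$\det(J_c(g_{\kappa^o}))=(-1)^d\det\big(J_c(\widetilde f_\kappa)-E^n_{d+1}\big).$$
   Context: A chemical reaction network $\mathcal{N}=(\mathcal{S},\mathcal{C},\mathcal{R})$ consists of a finite set of species $\mathcal{S}=\{S_1,\dots,S_n\}$, a finite set of complexes $\mathcal{C}\subset\mathbb{Z}_{\ge 0}^n$ (species $S_i$ identified with the $i$-th standard basis vector; the zero complex $0$ allowed), and a finite set of reactions $\mathcal{R}\subset\mathcal{C}\times\mathcal{C}$, written $y\to y'$, with $y\ne y'$. $\mathbb{R}_+$ denotes the positive reals. A rate vector is $\kappa=(k_{y\to y'})\in\mathbb{R}_+^{\mathcal{R}}$; the mass-action species formation rate function is $f_\kappa(c)=\sum_{y\to y'\in\mathcal{R}}k_{y\to y'}c^y(y'-y)$, $c^y=\prod_i c_i^{y_i}$, with components $f_{\kappa,i}$. The stoichiometric subspace is $\Gamma=\mathrm{span}\{y'-y:y\to y'\in\mathcal{R}\}$, $s=\dim\Gamma$, $d=n-s$; the network is closed if $\Gamma\ne\mathbb{R}^n$. A basis $\{\omega^1,\dots,\omega^d\}$ of $\Gamma^\perp$ with $\omega^i=(\lambda^i_1,\dots,\lambda^i_n)$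 is reduced if $\lambda^i_i=1$ and $\lambda^i_j=0$ for all $j\in\{1,\dots,d\}$, $j\ne i$ (species are assumed ordered so that such a basis exists). The extended rate function is $\widetilde f_\kappa(c)=(\omega^1\cdot c,\dots,\omega^d\cdot c,f_{\kappa,d+1}(c),\dots,f_{\kappa,n}(c))$; $J_c$ denotes the Jacobian at $c$. The associated fully open network $\mathcal{N}^o$ has reactions $\mathcal{R}^o=\mathcal{R}\cup\{S_i\to 0: i=1,\dots,n\}$. Let $\mathcal{O}(\mathcal{N})=\{i: S_i\to 0\notin\mathcal{R}\}$. Given $\kappa$, $\kappa^o\in\mathbb{R}_+^{\mathcal{R}^o}$ agrees with $\kappa$ on $\mathcal{R}$ and has $k_{S_i\to 0}=1$ for $i\in\mathcal{O}(\mathcal{N})$; $g_{\kappa^o}$ is the mass-action species formation rate function of $\mathcal{N}^o$ with rate vector $\kappa^o$, i.e. $g_{\kappa^o}(c)=f_\kappa(c)-(\delta_1c_1,\dots,\delta_nc_n)$ with $\delta_i=1$ if $i\in\mathcal{O}(\mathcal{N})$ and $\delta_i=0$ otherwise. $E^n_{d+1}$ is the $n\times n$ diagonal matrix with entry $\delta_i$ at position $(i,i)$ for $i=d+1,\dots,n$ and zeros elsewhere. *)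

theory Defs
  imports "HOL-Analysis.Analysis"
begin

text \<open>Species are indexed by a finite type 'n; complexes are functions 'n \<Rightarrow> nat;
  a reaction y \<rightarrow> y' is the pair (y, y'). Concentrations are vectors in real^'n.\<close>

type_synonym 'n complex = "'n \<Rightarrow> nat"
type_synonym 'n reaction = "'n complex \<times> 'n complex"

definition reaction_vector :: "'n::finite reaction \<Rightarrow> real^'n" where
  "reaction_vector r = (\<chi> i. real (snd r i) - real (fst r i))"

definition monomial :: "real^'n::finite \<Rightarrow> 'n complex \<Rightarrow> real" where
  "monomial c y = (\<Prod>i\<in>UNIV. (c $ i) ^ (y i))"

definition mass_action :: "'n::finite reaction set \<Rightarrow> ('n reaction \<Rightarrow> real) \<Rightarrow> real^'n \<Rightarrow> real^'n" where
  "mass_action R \<kappa> c = (\<Sum>r\<in>R. (\<kappa> r * monomial c (fst r)) *\<^sub>R reaction_vector r)"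

definition stoich_space :: "'n::finite reaction set \<Rightarrow> (real^'n) set" where
  "stoich_space R = span (reaction_vector ` R)"

definition is_network :: "'n::finite reaction set \<Rightarrow> bool" where
  "is_network R \<longleftrightarrow> finite R \<and> (\<forall>r\<in>R. fst r \<noteq> snd r)"

definition closed_network :: "'n::finite reaction set \<Rightarrow> bool" where
  "closed_network R \<longleftrightarrow> stoich_space R \<noteq> UNIV"

text \<open>Reduced basis of the orthogonal complement of Gamma, indexed by the set D of the "first d" species.\<close>
definition reduced_basis :: "'n::finite reaction set \<Rightarrow> 'n set \<Rightarrow> ('n \<Rightarrow> real^'n) \<Rightarrow> bool" where
  "reduced_basis R D \<omega> \<longleftrightarrow>
     inj_on \<omega> D \<and> independent (\<omega> ` D) \<and> span (\<omega> ` D) = orthogonal_comp (stoich_space R) \<and>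
     (\<forall>i\<in>D. \<omega> i $ i = 1 \<and> (\<forall>j\<in>D. j \<noteq> i \<longrightarrow> \<omega> i $ j = 0))"

definition ext_rate :: "'n::finite reaction set \<Rightarrow> ('n reaction \<Rightarrow> real) \<Rightarrow> 'n set \<Rightarrow> ('n \<Rightarrow> real^'n)
    \<Rightarrow> real^'n \<Rightarrow> real^'n" where
  "ext_rate R \<kappa> D \<omega> c = (\<chi> i. if i \<in> D then \<omega> i \<bullet> c else mass_action R \<kappa> c $ i)"

definition species_complex :: "'n \<Rightarrow> 'n complex" where
  "species_complex i = (\<lambda>j. if j = i then 1 else 0)"

definition outflow :: "'n \<Rightarrow> 'n reaction" where
  "outflow i = (species_complex i, (\<lambda>_. 0))"

definition open_reactions :: "'n reaction set \<Rightarrow> 'n reaction set" where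
  "open_reactions R = R \<union> range outflow"

definition open_rates :: "'n reaction set \<Rightarrow> ('n reaction \<Rightarrow> real) \<Rightarrow> 'n reaction \<Rightarrow> real" where
  "open_rates R \<kappa> r = (if r \<in> R then \<kappa> r else 1)"

definition delta :: "'n reaction set \<Rightarrow> 'n \<Rightarrow> real" where
  "delta R i = (if outflow i \<notin> R then 1 else 0)"

definition E_mat :: "'n::finite reaction set \<Rightarrow> 'n set \<Rightarrow> real^'n^'n" where
  "E_mat R D = (\<chi> i j. if i = j \<and> i \<notin> D then delta R i else 0)"

end

theory Submission
  imports Defs
begin

text \<open>Let \<open>J\<close> be the Jacobian of \<open>f\<^sub>\<kappa>\<close>, \<open>\<Delta>\<close> the diagonal matrix of the \<open>\<delta>\<^sub>i\<close>, \<open>P\<close> the diagonal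
  projection onto the species in \<open>D\<close>, and \<open>W\<close> the matrix whose \<open>k\<close>-th row is \<open>\<omega>\<^sup>k\<close> for \<open>k \<in> D\<close> and
  zero otherwise. Then \<open>J\<^sub>c(g) = J - \<Delta>\<close>, and the Jacobian of the extended rate function minus \<open>E\<close> is
  \<open>W + (I - P)(J - \<Delta>)\<close>.
  Each \<open>\<omega>\<^sup>k\<close> is orthogonal to \<open>\<Gamma>\<close>, so \<open>\<omega>\<^sup>k \<bullet> f\<^sub>\<kappa>\<close> vanishes identically and \<open>W J = 0\<close>; it is also
  orthogonal to \<open>-e\<^sub>m\<close> whenever \<open>S\<^sub>m \<rightarrow> 0\<close> is a reaction, so \<open>W \<Delta> = W\<close>. With \<open>P W = W\<close> and
  \<open>W P = P\<close> these give \<open>J - \<Delta> = (I - P - W)(W + (I - P)(J - \<Delta>))\<close>, and the row-operation matrix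
  \<open>I - P - W\<close> is block triangular with diagonal \<open>-1\<close> on \<open>D\<close> and \<open>1\<close> elsewhere.\<close>

lemma matrix_diff_ldistrib:
  fixes A :: "'a::comm_ring_1^'n::finite^'m"
  shows "A ** (B - C) = A ** B - A ** C"
  by (simp add: matrix_matrix_mult_def vec_eq_iff right_diff_distrib sum_subtractf)

lemma matrix_diff_rdistrib:
  fixes A :: "'a::comm_ring_1^'n::finite^'m"
  shows "(A - B) ** C = A ** C - B ** C"
  by (simp add: matrix_matrix_mult_def vec_eq_iff left_diff_distrib sum_subtractf)

definition diag_mat :: "('n \<Rightarrow> 'a::zero) \<Rightarrow> 'a^'n^'n" where
  "diag_mat d = (\<chi> i j. if i = j then d i else 0)"

lemma diag_mat_mult_left:
  fixes A :: "'a::semiring_1^'m^'n::finite"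
  shows "diag_mat d ** A = (\<chi> i j. d i * A $ i $ j)"
  by (simp add: diag_mat_def matrix_matrix_mult_def vec_eq_iff if_distrib if_distribR cong: if_cong)

lemma diag_mat_mult_right:
  fixes A :: "'a::semiring_1^'n::finite^'m"
  shows "A ** diag_mat d = (\<chi> i j. A $ i $ j * d j)"
  by (simp add: diag_mat_def matrix_matrix_mult_def vec_eq_iff if_distrib if_distribR cong: if_cong)

lemma diag_mat_mult_vector:
  fixes x :: "'a::semiring_1^'n::finite"
  shows "diag_mat d *v x = (\<chi> i. d i * x $ i)"
  by (simp add: diag_mat_def matrix_vector_mult_def vec_eq_iff if_distrib if_distribR cong: if_cong)

lemma mat_1_minus_diag_mat: "mat 1 - diag_mat d = (diag_mat (\<lambda>i. 1 - d i) :: 'a::ring_1^'n^'n)"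
  by (auto simp: diag_mat_def mat_def vec_eq_iff)

lemma row_reduction_identity:
  fixes P W J \<Delta> :: "'a::comm_ring_1^'n::finite^'n"
  assumes "P ** P = P" "P ** W = W" "W ** P = P" "W ** J = 0" "W ** \<Delta> = W"
  shows "(mat 1 - P - W) ** (W + (mat 1 - P) ** (J - \<Delta>)) = J - \<Delta>"
proof -
  have "W ** W = W"
    by (metis assms(2,3) matrix_mul_assoc)
  then have left: "(mat 1 - P - W) ** W = - W"
    using assms(2) by (simp add: matrix_diff_rdistrib)
  have right: "(mat 1 - P - W) ** (mat 1 - P) = mat 1 - W"
    using assms(1,3) by (simp add: matrix_diff_rdistrib matrix_diff_ldistrib)
  have WX: "W ** (J - \<Delta>) = - W"
    using assms(4,5) by (simp add: matrix_diff_ldistrib)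
  have "(mat 1 - P - W) ** (W + (mat 1 - P) ** (J - \<Delta>))
      = (mat 1 - P - W) ** W + ((mat 1 - P - W) ** (mat 1 - P)) ** (J - \<Delta>)"
    by (simp only: matrix_add_ldistrib matrix_mul_assoc)
  also have "\<dots> = - W + (J - \<Delta> - W ** (J - \<Delta>))"
    by (simp only: left right) (simp add: matrix_diff_rdistrib)
  also have "\<dots> = J - \<Delta>"
    by (simp add: WX)
  finally show ?thesis .
qed

lemma det_block_triangular_diagonal:
  fixes A :: "'a::comm_ring_1^'n::finite^'n"
  assumes "\<And>i j. i \<noteq> j \<Longrightarrow> A $ i $ j \<noteq> 0 \<Longrightarrow> i \<in> D \<and> j \<notin> D"
  shows "det A = (\<Prod>i\<in>UNIV. A $ i $ i)"
proof -
  have "(\<Prod>i\<in>UNIV. A $ i $ p i) = 0" if "p permutes UNIV" "p \<noteq> id" for p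
  proof -
    obtain k where "p k \<noteq> k"
      using \<open>p \<noteq> id\<close> by (auto simp: fun_eq_iff)
    have "\<exists>i. A $ i $ p i = 0"
    proof (rule ccontr)
      assume "\<nexists>i. A $ i $ p i = 0"
      then have moved: "p i \<noteq> i \<Longrightarrow> i \<in> D \<and> p i \<notin> D" for i
        by (metis assms)
      have "p (p k) \<noteq> p k"
        using \<open>p k \<noteq> k\<close> permutes_inj[OF \<open>p permutes UNIV\<close>] by (metis injD)
      then show False
        using moved[of k] moved[of "p k"] \<open>p k \<noteq> k\<close> by blast
    qed
    then show ?thesis
      by (metis UNIV_I finite prod_zero)
  qed
  then have "det A = (\<Sum>p\<in>{id}. of_int (sign p) * (\<Prod>i\<in>UNIV. A $ i $ p i))"
    unfolding det_def
    by (intro sum.mono_neutral_right finite_permutations) (auto simp: permutes_id)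
  then show ?thesis
    by (simp add: sign_id)
qed

lemma jacobian_at_eqI:
  fixes F :: "real^'n::finite \<Rightarrow> real^'m::finite"
  assumes "(F has_derivative (\<lambda>h. M *v h)) (at c)"
  shows "jacobian F (at c) = M"
  using frechet_derivative_at[OF assms] unfolding jacobian_def
  by (metis matrix_of_matrix_vector_mul)

lemma differentiable_prod:
  fixes f :: "'i \<Rightarrow> 'a::real_normed_vector \<Rightarrow> real"
  assumes "\<And>i. i \<in> I \<Longrightarrow> f i differentiable (at x)"
  shows "(\<lambda>x. \<Prod>i\<in>I. f i x) differentiable (at x)"
proof -
  from assms obtain f' where "\<And>i. i \<in> I \<Longrightarrow> (f i has_derivative f' i) (at x)"
    unfolding differentiable_def by metis
  then show ?thesis
    unfolding differentiable_def by (blast intro: has_derivative_prod)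
qed

lemma differentiable_mass_action:
  assumes "finite R"
  shows "mass_action R \<kappa> differentiable (at c)"
  unfolding mass_action_def monomial_def
  by (intro differentiable_sum ballI differentiable_scaleR differentiable_mult differentiable_const
      differentiable_prod differentiable_power assms
      bounded_linear_imp_differentiable[OF bounded_linear_vec_nth])

lemma monomial_species_complex: "monomial x (species_complex i) = x $ i"
proof -
  have "(\<Prod>j\<in>UNIV. x $ j ^ species_complex i j) = (\<Prod>j\<in>UNIV. if j = i then x $ j else 1)"
    by (rule prod.cong) (auto simp: species_complex_def)
  then show ?thesis
    unfolding monomial_def by simp
qed

lemma reaction_vector_outflow: "reaction_vector (outflow i) = - axis i 1"
  by (simp add: vec_eq_iff reaction_vector_def outflow_def species_complex_def axis_def)

lemma inj_outflow: "inj outflow"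
  by (rule injI) (auto simp: outflow_def species_complex_def fun_eq_iff split: if_splits)

lemma mass_action_outflows:
  "mass_action (outflow ` S) (\<lambda>_. 1) x = - (diag_mat (\<lambda>i. of_bool (i \<in> S)) *v x)"
proof -
  have fst_outflow: "fst (outflow i) = species_complex i" for i :: 'n
    by (simp add: outflow_def)
  have "mass_action (outflow ` S) (\<lambda>_. 1) x = (\<Sum>i\<in>S. - (x $ i *\<^sub>R axis i 1))"
    unfolding mass_action_def
    by (simp add: sum.reindex inj_on_subset[OF inj_outflow] fst_outflow monomial_species_complex
        reaction_vector_outflow)
  also have "\<dots> = - (diag_mat (\<lambda>i. of_bool (i \<in> S)) *v x)"
    by (simp add: vec_eq_iff diag_mat_mult_vector sum_negf axis_def if_distrib cong: if_cong)
  finally show ?thesis .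
qed

lemma mass_action_open_reactions:
  assumes "finite R"
  shows "mass_action (open_reactions R) (open_rates R \<kappa>) x
       = mass_action R \<kappa> x - diag_mat (delta R) *v x"
proof -
  let ?S = "{i. outflow i \<notin> R}"
  have "open_reactions R = R \<union> outflow ` ?S" "R \<inter> outflow ` ?S = {}"
    unfolding open_reactions_def by auto
  then have "mass_action (open_reactions R) (open_rates R \<kappa>) x
      = mass_action R (open_rates R \<kappa>) x + mass_action (outflow ` ?S) (open_rates R \<kappa>) x"
    unfolding mass_action_def using assms by (simp add: sum.union_disjoint)
  also have "mass_action R (open_rates R \<kappa>) x = mass_action R \<kappa> x"
    unfolding mass_action_def by (intro sum.cong) (auto simp: open_rates_def)
  also have "mass_action (outflow ` ?S) (open_rates R \<kappa>) x = mass_action (outflow ` ?S) (\<lambda>_. 1) x"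
    unfolding mass_action_def by (intro sum.cong) (auto simp: open_rates_def)
  also have "delta R = (\<lambda>i. of_bool (i \<in> ?S))"
    by (simp add: fun_eq_iff delta_def)
  ultimately show ?thesis
    by (simp add: mass_action_outflows)
qed

lemma jacobian_open_mass_action:
  assumes "finite R"
  shows "jacobian (mass_action (open_reactions R) (open_rates R \<kappa>)) (at c)
       = jacobian (mass_action R \<kappa>) (at c) - diag_mat (delta R)"
proof (rule jacobian_at_eqI)
  have open_eq: "mass_action (open_reactions R) (open_rates R \<kappa>)
      = (\<lambda>x. mass_action R \<kappa> x - diag_mat (delta R) *v x)"
    using mass_action_open_reactions[OF assms] by blast
  have "((\<lambda>x. mass_action R \<kappa> x - diag_mat (delta R) *v x) has_derivative
      (\<lambda>h. jacobian (mass_action R \<kappa>) (at c) *v h - diag_mat (delta R) *v h)) (at c)"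
    using differentiable_mass_action[OF assms] jacobian_works
    by (intro has_derivative_diff bounded_linear_imp_has_derivative matrix_vector_mul_bounded_linear)
      blast
  then show "(mass_action (open_reactions R) (open_rates R \<kappa>) has_derivative
      (\<lambda>h. (jacobian (mass_action R \<kappa>) (at c) - diag_mat (delta R)) *v h)) (at c)"
    by (simp add: open_eq matrix_vector_mult_diff_rdistrib)
qed

definition coord_proj :: "'n set \<Rightarrow> real^'n^'n" where
  "coord_proj D = diag_mat (\<lambda>i. of_bool (i \<in> D))"

definition conservation_rows :: "'n set \<Rightarrow> ('n \<Rightarrow> real^'n) \<Rightarrow> real^'n^'n" where
  "conservation_rows D \<omega> = (\<chi> k. if k \<in> D then \<omega> k else 0)"

lemma ext_rate_eq:
  "ext_rate R \<kappa> D \<omega> x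
     = conservation_rows D \<omega> *v x + (mat 1 - coord_proj D) *v mass_action R \<kappa> x"
  unfolding coord_proj_def mat_1_minus_diag_mat diag_mat_mult_vector
  by (simp add: vec_eq_iff ext_rate_def conservation_rows_def matrix_vector_mult_def inner_vec_def)

lemma jacobian_ext_rate:
  assumes "finite R"
  shows "jacobian (ext_rate R \<kappa> D \<omega>) (at c)
       = conservation_rows D \<omega> + (mat 1 - coord_proj D) ** jacobian (mass_action R \<kappa>) (at c)"
proof (rule jacobian_at_eqI)
  let ?W = "conservation_rows D \<omega>" and ?Q = "mat 1 - coord_proj D"
    and ?J = "jacobian (mass_action R \<kappa>) (at c)"
  have "((\<lambda>x. ?W *v x + ?Q *v mass_action R \<kappa> x) has_derivative (\<lambda>h. ?W *v h + ?Q *v (?J *v h))) (at c)"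
    using differentiable_mass_action[OF assms] jacobian_works
    by (intro has_derivative_add bounded_linear_imp_has_derivative matrix_vector_mul_bounded_linear
        bounded_linear.has_derivative[OF matrix_vector_mul_bounded_linear]) blast
  then show "(ext_rate R \<kappa> D \<omega> has_derivative (\<lambda>h. (?W + ?Q ** ?J) *v h)) (at c)"
    by (simp add: ext_rate_eq[abs_def] matrix_vector_mult_add_rdistrib matrix_vector_mul_assoc)
qed

lemma E_mat_eq: "E_mat R D = (mat 1 - coord_proj D) ** diag_mat (delta R)"
  by (simp add: E_mat_def coord_proj_def mat_1_minus_diag_mat diag_mat_mult_right vec_eq_iff)
    (simp add: diag_mat_def)

lemma reduced_basis_orthogonal_reaction:
  assumes "reduced_basis R D \<omega>" "k \<in> D" "r \<in> R"
  shows "\<omega> k \<bullet> reaction_vector r = 0"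
proof -
  have "\<omega> k \<in> orthogonal_comp (stoich_space R)"
    using assms(1,2) span_base[of "\<omega> k" "\<omega> ` D"] by (auto simp: reduced_basis_def)
  moreover have "reaction_vector r \<in> stoich_space R"
    unfolding stoich_space_def using assms(3) by (intro span_base) auto
  ultimately show ?thesis
    by (auto simp: orthogonal_comp_def orthogonal_def inner_commute)
qed

lemma reduced_basis_coord:
  assumes "reduced_basis R D \<omega>" "k \<in> D" "j \<in> D"
  shows "\<omega> k $ j = of_bool (j = k)"
  using assms by (auto simp: reduced_basis_def)

lemma reduced_basis_outflow_coord:
  assumes "reduced_basis R D \<omega>" "k \<in> D" "outflow m \<in> R"
  shows "\<omega> k $ m = 0"
  using reduced_basis_orthogonal_reaction[OF assms] by (simp add: reaction_vector_outflow inner_axis)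

lemma conservation_rows_mult_jacobian:
  assumes "finite R" "reduced_basis R D \<omega>"
  shows "conservation_rows D \<omega> ** jacobian (mass_action R \<kappa>) (at c) = 0"
proof -
  let ?W = "conservation_rows D \<omega>" and ?J = "jacobian (mass_action R \<kappa>) (at c)"
  have "\<omega> k \<bullet> mass_action R \<kappa> x = 0" if "k \<in> D" for k x
    unfolding mass_action_def
    by (simp add: inner_sum_right reduced_basis_orthogonal_reaction[OF assms(2) that])
  then have conserved: "(\<lambda>x. ?W *v mass_action R \<kappa> x) = (\<lambda>x. 0)"
    by (auto simp: fun_eq_iff vec_eq_iff conservation_rows_def matrix_vector_mult_def
        inner_vec_def)
  have "((\<lambda>x. ?W *v mass_action R \<kappa> x) has_derivative (\<lambda>h. (?W ** ?J) *v h)) (at c)"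
    using bounded_linear.has_derivative[OF matrix_vector_mul_bounded_linear
        jacobian_works[THEN iffD1, OF differentiable_mass_action[OF assms(1)]]]
    by (simp add: matrix_vector_mul_assoc)
  then have "(\<lambda>h. (?W ** ?J) *v h) = (\<lambda>h. 0)"
    unfolding conserved by (rule has_derivative_unique) (rule has_derivative_const)
  then show ?thesis
    by (simp add: matrix_eq fun_eq_iff)
qed

lemma jacobian_row_reduction:
  fixes \<kappa> :: "'n::finite reaction \<Rightarrow> real" and c :: "real^'n"
  assumes "finite R" "reduced_basis R D \<omega>"
  defines "J \<equiv> jacobian (mass_action R \<kappa>) (at c)"
    and "P \<equiv> coord_proj D" and "W \<equiv> conservation_rows D \<omega>"
  shows "J - diag_mat (delta R) = (mat 1 - P - W) ** (W + (mat 1 - P) ** (J - diag_mat (delta R)))"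
proof (rule row_reduction_identity[symmetric])
  show "P ** P = P" "P ** W = W"
    by (auto simp: P_def W_def coord_proj_def conservation_rows_def diag_mat_mult_left vec_eq_iff)
      (auto simp: diag_mat_def)
  show "W ** P = P"
    by (auto simp: P_def W_def coord_proj_def conservation_rows_def diag_mat_mult_right vec_eq_iff
        reduced_basis_coord[OF assms(2)]) (auto simp: diag_mat_def)
  show "W ** J = 0"
    unfolding W_def J_def using assms(1,2) by (rule conservation_rows_mult_jacobian)
  show "W ** diag_mat (delta R) = W"
    by (auto simp: W_def conservation_rows_def diag_mat_mult_right vec_eq_iff delta_def
        reduced_basis_outflow_coord[OF assms(2)])
qed

lemma det_row_reduction:
  assumes "reduced_basis R D \<omega>"
  shows "det (mat 1 - coord_proj D - conservation_rows D \<omega>) = (-1) ^ card D"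
proof -
  have "det (mat 1 - coord_proj D - conservation_rows D \<omega>) = (\<Prod>i\<in>UNIV. if i \<in> D then -1 else 1)"
    by (subst det_block_triangular_diagonal[where D = D])
      (auto simp: mat_def coord_proj_def diag_mat_def conservation_rows_def
        reduced_basis_coord[OF assms] split: if_splits intro!: prod.cong)
  then show ?thesis
    by (simp add: prod.If_cases)
qed

theorem theorem7p1:
  fixes R :: "'n::finite reaction set" and \<kappa> :: "'n reaction \<Rightarrow> real"
    and D :: "'n set" and \<omega> :: "'n \<Rightarrow> real^'n" and c :: "real^'n"
  assumes "is_network R"
    and "closed_network R"
    and "reduced_basis R D \<omega>"
    and "\<forall>r\<in>R. \<kappa> r > 0"
  shows "det (jacobian (mass_action (open_reactions R) (open_rates R \<kappa>)) (at c))
       = (-1) ^ card D * det (jacobian (ext_rate R \<kappa> D \<omega>) (at c) - E_mat R D)"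
proof -
  have fin: "finite R"
    using assms(1) by (simp add: is_network_def)
  let ?J = "jacobian (mass_action R \<kappa>) (at c)" and ?\<Delta> = "diag_mat (delta R)"
    and ?P = "coord_proj D" and ?W = "conservation_rows D \<omega>"
  have "jacobian (ext_rate R \<kappa> D \<omega>) (at c) - E_mat R D = ?W + (mat 1 - ?P) ** (?J - ?\<Delta>)"
    by (simp add: jacobian_ext_rate[OF fin] E_mat_eq matrix_diff_ldistrib)
  moreover have "det (?J - ?\<Delta>) = det (mat 1 - ?P - ?W) * det (?W + (mat 1 - ?P) ** (?J - ?\<Delta>))"
    by (subst jacobian_row_reduction[OF fin assms(3)]) (rule det_mul)
  ultimately show ?thesis
    by (simp add: jacobian_open_mass_action[OF fin] det_row_reduction[OF assms(3)])
qed

end
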